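(* Assume the codebook is randomly generated so that all symbols of all codewords are i.i.d. according to some distribution $P$ on $\mathcal X$. Then for any threshold constants $t_1,t_2\in\mathbb R$, any asynchronism level $A\ge1$, any message $m$ and any $l\in\{1,\dots,A\}$, $$\sum_{m'\neq m}\ \sum_{n=1}^{A+N-1}\ \sum_{i=1}^{\min(N,n)}\mathbb P_{m,l}\big(E(m',n,i)\big)\le\big(M^{-(t_1+t_2-1)}A+M^{-(t_2-1)}\big)\,\mathrm{poly}(N).$$
   Context: Channel: finite input alphabet $\mathcal X$, finite output alphabet $\mathcal Y$, transition probabilities $Q(y|x)$, and a noise symbol $\star\in\mathcal X$. A codebook has $M$ codewords $C^N(m)=(C_1(m),\dots,C_N(m))\in\mathcal X^N$, $m=1,\dots,M$. Given the codebook, the message $m$ and the start time $\nu=l$, the outputs $Y_1,Y_2,\dots$ are independent with $Y_i\sim Q(\cdot|\star)$ if $i\le l-1$ or $i\ge l+N$, and $Y_i\sim Q(\cdot|C_{i-l+1}(m))$ for $l\le i\le l+N-1$; $\mathbb P_{m,l}$ is the joint probability over the random codebook and the outputs. Notation: for $j\ge i$, $x_i^j=(x_i,\dots,x_j)$ and $x^j=x_1^j$; $\hat P_{(x^n,y^n)}$ is the empirical joint distribution of a pair of sequences and $\hat P_{y^n}$ the empirical distribution of $y^n$; $I(J)$ is the mutual information of a joint distribution $J$ on $\mathcal X\times\mathcal Y$; $D$ is Kullback–Leibler divergence; logs are natural. For a message $m'$, time $n\ge1$, $i\in\{1,\dots,\min(N,n)\}$ and $k\in\{1,\dots,i\}$,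 $E(m',n,i,k)$ is the intersection of the events $$k\,I\big(\hat P_{(C^k(m'),Y_{n-i+1}^{n-i+k})}\big)+(i-k)\,I\big(\hat P_{(C_{k+1}^i(m'),Y_{n-i+k+1}^n)}\big)\ge t_2\ln M\quad\text{and}\quad i\,D\big(\hat P_{Y_{n-i+1}^n}\,\|\,Q(\cdot|\star)\big)\ge t_1\ln M$$ (a term with zero length, i.e. $(i-k)=0$, is taken to be $0$), and $E(m',n,i)=\bigcap_{k=1}^iE(m',n,i,k)$. $\mathrm{poly}(N)$ denotes a term growing no faster than polynomially in $N$. *)

theory Defs
  imports "HOL-Probability.Probability"
begin

definition seg :: "(nat \<Rightarrow> 'a) \<Rightarrow> nat \<Rightarrow> nat \<Rightarrow> 'a list" where
  "seg f a len = map f [a..<a+len]"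

text \<open>Empirical (joint) distribution of a finite sequence (of pairs); zero for the empty sequence.\<close>
definition emp :: "'a list \<Rightarrow> 'a \<Rightarrow> real" where
  "emp zs z = real (length (filter (\<lambda>w. w = z) zs)) / real (length zs)"

definition mutual_info :: "('x::finite \<times> 'y::finite \<Rightarrow> real) \<Rightarrow> real" where
  "mutual_info J =
     (\<Sum>x\<in>UNIV. \<Sum>y\<in>UNIV.
        if J (x, y) > 0
        then J (x, y) * ln (J (x, y) / ((\<Sum>y'\<in>UNIV. J (x, y')) * (\<Sum>x'\<in>UNIV. J (x', y))))
        else 0)"

definition KL_div :: "('y::finite \<Rightarrow> real) \<Rightarrow> ('y \<Rightarrow> real) \<Rightarrow> ereal" where
  "KL_div V q =
     (if \<forall>y. V y > 0 \<longrightarrow> q y > 0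
      then ereal (\<Sum>y\<in>UNIV. if V y > 0 then V y * ln (V y / q y) else 0)
      else \<infinity>)"

text \<open>Random codebook: symbol j of codeword m is c (m, j), all i.i.d. P, for m \<in> {1..M}, j \<in> {1..N}.\<close>
definition codebook_pmf :: "'x pmf \<Rightarrow> nat \<Rightarrow> nat \<Rightarrow> (nat \<times> nat \<Rightarrow> 'x) pmf" where
  "codebook_pmf P M N = Pi_pmf ({1..M} \<times> {1..N}) undefined (\<lambda>_. P)"

text \<open>Channel outputs Y_1 ... Y_T given codebook c, message m and start time l
  (only the outputs relevant to the events, T = A + N - 1, are generated).\<close>
definition outputs_pmf ::
  "('x \<Rightarrow> 'y pmf) \<Rightarrow> 'x \<Rightarrow> nat \<Rightarrow> nat \<Rightarrow> (nat \<times> nat \<Rightarrow> 'x) \<Rightarrow> nat \<Rightarrow> nat \<Rightarrow> (nat \<Rightarrow> 'y) pmf" where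
  "outputs_pmf Q star N T c m l =
     Pi_pmf {1..T} undefined
       (\<lambda>i. if l \<le> i \<and> i \<le> l + N - 1 then Q (c (m, i - l + 1)) else Q star)"

definition joint_pmf ::
  "'x pmf \<Rightarrow> ('x \<Rightarrow> 'y pmf) \<Rightarrow> 'x \<Rightarrow> nat \<Rightarrow> nat \<Rightarrow> nat \<Rightarrow> nat \<Rightarrow> nat
     \<Rightarrow> ((nat \<times> nat \<Rightarrow> 'x) \<times> (nat \<Rightarrow> 'y)) pmf" where
  "joint_pmf P Q star M N A m l =
     do { c \<leftarrow> codebook_pmf P M N;
          y \<leftarrow> outputs_pmf Q star N (A + N - 1) c m l;
          return_pmf (c, y) }"

definition E_k ::
  "('x::finite \<Rightarrow> 'y::finite pmf) \<Rightarrow> 'x \<Rightarrow> nat \<Rightarrow> real \<Rightarrow> real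
     \<Rightarrow> nat \<Rightarrow> nat \<Rightarrow> nat \<Rightarrow> nat \<Rightarrow> (nat \<times> nat \<Rightarrow> 'x) \<Rightarrow> (nat \<Rightarrow> 'y) \<Rightarrow> bool" where
  "E_k Q star M t1 t2 m' n i k c y \<longleftrightarrow>
     real k * mutual_info (emp (zip (seg (\<lambda>j. c (m', j)) 1 k) (seg y (n - i + 1) k)))
       + real (i - k) * mutual_info (emp (zip (seg (\<lambda>j. c (m', j)) (k + 1) (i - k))
                                            (seg y (n - i + k + 1) (i - k))))
       \<ge> t2 * ln (real M)
     \<and> ereal (real i) * KL_div (emp (seg y (n - i + 1) i)) (pmf (Q star)) \<ge> ereal (t1 * ln (real M))"

definition E_all ::
  "('x::finite \<Rightarrow> 'y::finite pmf) \<Rightarrow> 'x \<Rightarrow> nat \<Rightarrow> real \<Rightarrow> real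
     \<Rightarrow> nat \<Rightarrow> nat \<Rightarrow> nat \<Rightarrow> (nat \<times> nat \<Rightarrow> 'x) \<Rightarrow> (nat \<Rightarrow> 'y) \<Rightarrow> bool" where
  "E_all Q star M t1 t2 m' n i c y \<longleftrightarrow> (\<forall>k\<in>{1..i}. E_k Q star M t1 t2 m' n i k c y)"

end

theory Submission
  imports Defs
begin

text \<open>Fix a wrong message \<open>m' \<noteq> m\<close>, a window end \<open>n\<close> and a length \<open>i\<close>, and keep only the
  \<open>k = i\<close> condition of \<open>E(m', n, i)\<close>. Since the outputs depend only on codeword \<open>m\<close>,
  codeword \<open>m'\<close> is i.i.d. \<open>P\<close> given the outputs, and the method of types (change of measure to
  the law under which a given joint type is typical, plus a union bound over the polynomially
  many types) bounds the probability that its empirical mutual information with the output window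
  is at least \<open>t\<^sub>2 ln M / i\<close> by \<open>poly(N) M\<^sup>-\<^sup>t\<^sup>2\<close>. If the window does not overlap the transmission,
  the outputs in it are i.i.d. \<open>Q(\<cdot>|\<star>)\<close> and independent of codeword \<open>m'\<close>, so the divergence
  condition contributes a further factor \<open>poly(N) M\<^sup>-\<^sup>t\<^sup>1\<close>. Only \<open>O(N)\<close> window ends overlap the
  transmission; summing over the \<open>M\<close> messages, \<open>A + N - 1\<close> window ends and \<open>N\<close> lengths gives
  the bound.\<close>

lemma measure_bind_pmf_le_indicator:
  assumes "\<And>x. x \<in> set_pmf p \<Longrightarrow> measure_pmf.prob (q x) S \<le> B * indicator T x" "B \<ge> 0"
  shows "measure_pmf.prob (bind_pmf p q) S \<le> B * measure_pmf.prob p T"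
proof -
  have "emeasure (measure_pmf (bind_pmf p q)) S = (\<integral>\<^sup>+x. emeasure (measure_pmf (q x)) S \<partial>p)"
    by simp
  also have "\<dots> \<le> (\<integral>\<^sup>+x. ennreal B * indicator T x \<partial>p)"
  proof (rule nn_integral_mono_AE)
    show "AE x in measure_pmf p. emeasure (measure_pmf (q x)) S \<le> ennreal B * indicator T x"
      unfolding AE_measure_pmf_iff
    proof
      fix x assume "x \<in> set_pmf p"
      then have "ennreal (measure_pmf.prob (q x) S) \<le> ennreal (B * indicator T x)"
        by (intro ennreal_leI assms(1))
      then show "emeasure (measure_pmf (q x)) S \<le> ennreal B * indicator T x"
        by (cases "x \<in> T") (auto simp: measure_pmf.emeasure_eq_measure)
    qed
  qed
  also have "\<dots> = ennreal (B * measure_pmf.prob p T)"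
    using assms(2) by (simp add: nn_integral_cmult_indicator measure_pmf.emeasure_eq_measure ennreal_mult)
  finally show ?thesis
    by (simp add: measure_pmf.emeasure_eq_measure ennreal_le_iff assms(2))
qed

lemma measure_bind_pmf_le:
  assumes "\<And>x. x \<in> set_pmf p \<Longrightarrow> measure_pmf.prob (q x) S \<le> B" "B \<ge> 0"
  shows "measure_pmf.prob (bind_pmf p q) S \<le> B"
  using measure_bind_pmf_le_indicator[of p q S B UNIV] assms by simp

lemma measure_pmf_le_of_pmf_eq_mult:
  assumes "finite (set_pmf p)" "c \<ge> 0"
    and "\<And>x. x \<in> E \<Longrightarrow> x \<in> set_pmf p \<Longrightarrow> pmf p x = c * pmf q x"
  shows "measure_pmf.prob p E \<le> c"
proof -
  have "measure_pmf.prob p E = measure_pmf.prob p (E \<inter> set_pmf p)"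
    by (simp add: measure_Int_set_pmf)
  also have "\<dots> = (\<Sum>x\<in>E \<inter> set_pmf p. c * pmf q x)"
    using assms(1,3) by (simp add: measure_measure_pmf_finite)
  also have "\<dots> = c * measure_pmf.prob q (E \<inter> set_pmf p)"
    using assms(1) by (simp add: measure_measure_pmf_finite sum_distrib_left)
  also have "\<dots> \<le> c"
    using assms(2) by (simp add: mult_left_le)
  finally show ?thesis .
qed

lemma prob_union_fibres_le:
  assumes "\<And>w. st w \<in> T" "finite T" "card T \<le> K" "e \<ge> 0"
    and "\<And>J. J \<in> T \<Longrightarrow> \<Phi> J \<Longrightarrow> measure_pmf.prob p {w. st w = J} \<le> e"
  shows "measure_pmf.prob p {w. \<Phi> (st w)} \<le> real K * e"
proof -
  let ?I = "{J \<in> T. \<Phi> J}"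
  have "measure_pmf.prob p {w. \<Phi> (st w)} \<le> measure_pmf.prob p (\<Union>J\<in>?I. {w. st w = J})"
    using assms(1) by (intro measure_pmf.finite_measure_mono) auto
  also have "\<dots> \<le> (\<Sum>J\<in>?I. measure_pmf.prob p {w. st w = J})"
    using assms(2) by (intro measure_pmf.finite_measure_subadditive_finite) auto
  also have "\<dots> \<le> real (card ?I) * e"
    using sum_mono[of ?I _ "\<lambda>_. e"] assms(5) by simp
  also have "\<dots> \<le> real K * e"
    using card_mono[OF assms(2), of ?I] assms(3,4) by (intro mult_right_mono) auto
  finally show ?thesis .
qed

section \<open>Empirical distributions and types\<close>

lemma emp_eq_count_list: "emp zs z = real (count_list zs z) / real (length zs)"
proof -
  have "count_list zs z = length (filter (\<lambda>w. w = z) zs)"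
    by (induction zs) auto
  then show ?thesis by (simp add: emp_def)
qed

lemma emp_nonneg: "emp zs z \<ge> 0"
  by (simp add: emp_def)

lemma emp_pos: "z \<in> set zs \<Longrightarrow> emp zs z > 0"
  using count_list_0_iff[of zs z] by (cases zs) (auto simp: emp_eq_count_list)

lemma sum_list_map_eq_length_mult_emp:
  fixes h :: "'z::finite \<Rightarrow> real"
  assumes "zs \<noteq> []"
  shows "sum_list (map h zs) = real (length zs) * (\<Sum>z\<in>UNIV. emp zs z * h z)"
proof -
  have count: "sum_list (map h xs) = (\<Sum>z\<in>UNIV. real (count_list xs z) * h z)" for xs
  proof (induction xs)
    case (Cons x xs)
    have "(\<Sum>z\<in>UNIV. real (count_list (x # xs) z) * h z)
        = (\<Sum>z\<in>UNIV. real (count_list xs z) * h z + (if x = z then h z else 0))"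
      by (rule sum.cong) (auto simp: distrib_right)
    then show ?case
      using Cons by (simp add: sum.distrib)
  qed simp
  show ?thesis
    using assms by (simp add: count emp_eq_count_list sum_distrib_left)
qed

lemma sum_emp_eq_1:
  fixes zs :: "'z::finite list"
  assumes "zs \<noteq> []"
  shows "(\<Sum>z\<in>UNIV. emp zs z) = 1"
  using sum_list_map_eq_length_mult_emp[OF assms, of "\<lambda>_. 1"] assms
  by (simp add: sum_list_triv)

definition emp_types :: "nat \<Rightarrow> ('z \<Rightarrow> real) set" where
  "emp_types i = {emp zs |zs. length zs = i}"

lemma emp_types_subset:
  "emp_types i \<subseteq> (\<lambda>k z. real (k z) / real i) ` (PiE UNIV (\<lambda>_::'z::finite. {..i}))"
proof
  fix J :: "'z \<Rightarrow> real" assume "J \<in> emp_types i"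
  then obtain zs where zs: "length zs = i" "J = emp zs"
    by (auto simp: emp_types_def)
  let ?k = "\<lambda>z. count_list zs z"
  have "J = (\<lambda>z. real (?k z) / real i)"
    using zs by (auto simp: emp_eq_count_list)
  moreover have "?k \<in> PiE UNIV (\<lambda>_. {..i})"
    using zs by (auto simp: count_le_length)
  ultimately show "J \<in> (\<lambda>k z. real (k z) / real i) ` (PiE UNIV (\<lambda>_. {..i}))"
    by blast
qed

lemma finite_emp_types: "finite (emp_types i :: ('z::finite \<Rightarrow> real) set)"
  by (rule finite_subset[OF emp_types_subset]) (simp add: finite_PiE)

lemma card_emp_types_le: "card (emp_types i :: ('z::finite \<Rightarrow> real) set) \<le> (i + 1) ^ CARD('z)"
proof -
  have "card (emp_types i :: ('z \<Rightarrow> real) set)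
      \<le> card ((\<lambda>k z. real (k z) / real i) ` (PiE UNIV (\<lambda>_::'z. {..i})))"
    by (intro card_mono emp_types_subset) (simp add: finite_PiE)
  also have "\<dots> \<le> card (PiE UNIV (\<lambda>_::'z. {..i}))"
    by (rule card_image_le) (simp add: finite_PiE)
  finally show ?thesis
    by (simp add: card_PiE)
qed

text \<open>\<open>D(J \<parallel> p \<times> J\<^sub>Y)\<close>, where \<open>J\<^sub>Y\<close> is the second marginal of \<open>J\<close>: the exponent of the
  probability that i.i.d. \<open>p\<close> samples paired with a fixed sequence have joint type \<open>J\<close>.\<close>
definition cond_div :: "'a pmf \<Rightarrow> ('a::finite \<times> 'b::finite \<Rightarrow> real) \<Rightarrow> real" where
  "cond_div p J = (\<Sum>z\<in>UNIV. if J z > 0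
     then J z * ln (J z / ((\<Sum>a\<in>UNIV. J (a, snd z)) * pmf p (fst z))) else 0)"

lemma sum_UNIV_prod:
  fixes F :: "'a::finite \<times> 'b::finite \<Rightarrow> real"
  shows "(\<Sum>z\<in>UNIV. F z) = (\<Sum>a\<in>UNIV. \<Sum>b\<in>UNIV. F (a, b))"
  by (simp add: UNIV_Times_UNIV[symmetric] sum.cartesian_product del: UNIV_Times_UNIV)

lemma gibbs_inequality:
  fixes q :: "'a::finite \<Rightarrow> real"
  assumes "\<And>a. q a \<ge> 0" "(\<Sum>a\<in>UNIV. q a) = 1" "\<And>a. q a > 0 \<Longrightarrow> pmf p a > 0"
  shows "(\<Sum>a\<in>UNIV. q a * ln (q a / pmf p a)) \<ge> 0"
proof -
  have "q a - pmf p a \<le> q a * ln (q a / pmf p a)" for a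
  proof (cases "q a > 0")
    case True
    with assms(3) have p: "pmf p a > 0" .
    have "ln (pmf p a / q a) \<le> pmf p a / q a - 1"
      using p True by (intro ln_le_minus_one) simp
    then have "q a * (- ln (q a / pmf p a)) \<le> q a * (pmf p a / q a - 1)"
      using p True by (intro mult_left_mono) (simp_all add: ln_div)
    then show ?thesis
      using True by (simp add: algebra_simps)
  next
    case False
    then show ?thesis
      using assms(1)[of a] by simp
  qed
  then have "(\<Sum>a\<in>UNIV. q a - pmf p a) \<le> (\<Sum>a\<in>UNIV. q a * ln (q a / pmf p a))"
    by (rule sum_mono)
  then show ?thesis
    using assms(2) by (simp add: sum_subtractf sum_pmf_eq_1)
qed

text \<open>The gap is the divergence of the first marginal of \<open>J\<close> from \<open>p\<close>.\<close>
lemma mutual_info_le_cond_div: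
  fixes J :: "'a::finite \<times> 'b::finite \<Rightarrow> real"
  assumes nonneg: "\<And>z. J z \<ge> 0" and sum1: "(\<Sum>z\<in>UNIV. J z) = 1"
    and pos: "\<And>z. J z > 0 \<Longrightarrow> pmf p (fst z) > 0"
  shows "mutual_info J \<le> cond_div p J"
proof -
  define JX where "JX a = (\<Sum>b\<in>UNIV. J (a, b))" for a
  define JY where "JY b = (\<Sum>a\<in>UNIV. J (a, b))" for b
  have JX: "J (a, b) \<le> JX a" and JY: "J (a, b) \<le> JY b" for a b
    unfolding JX_def JY_def using nonneg by (intro member_le_sum; simp)+
  have JX_pos: "pmf p a > 0" if "JX a > 0" for a
  proof -
    obtain b where "J (a, b) \<noteq> 0"
      using \<open>JX a > 0\<close> unfolding JX_def by (metis less_irrefl sum.neutral)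
    then show ?thesis
      using pos[of "(a, b)"] nonneg[of "(a, b)"] by simp
  qed
  have "cond_div p J = (\<Sum>a\<in>UNIV. \<Sum>b\<in>UNIV.
      if J (a, b) > 0 then J (a, b) * ln (J (a, b) / (JY b * pmf p a)) else 0)"
    unfolding cond_div_def JY_def by (subst sum_UNIV_prod) (simp only: fst_conv snd_conv)
  then have "cond_div p J - mutual_info J
      = (\<Sum>a\<in>UNIV. \<Sum>b\<in>UNIV.
          (if J (a, b) > 0 then J (a, b) * ln (J (a, b) / (JY b * pmf p a)) else 0)
        - (if J (a, b) > 0 then J (a, b) * ln (J (a, b) / (JX a * JY b)) else 0))"
    unfolding mutual_info_def JX_def JY_def by (simp add: sum_subtractf)
  also have "\<dots> = (\<Sum>a\<in>UNIV. \<Sum>b\<in>UNIV. J (a, b) * ln (JX a / pmf p a))"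
  proof (intro sum.cong refl)
    fix a b
    show "(if J (a, b) > 0 then J (a, b) * ln (J (a, b) / (JY b * pmf p a)) else 0)
        - (if J (a, b) > 0 then J (a, b) * ln (J (a, b) / (JX a * JY b)) else 0)
        = J (a, b) * ln (JX a / pmf p a)"
      using JX[of a b] JY[of a b] pos[of "(a, b)"] nonneg[of "(a, b)"]
      by (cases "J (a, b) > 0") (simp_all add: ln_div ln_mult algebra_simps)
  qed
  also have "\<dots> = (\<Sum>a\<in>UNIV. JX a * ln (JX a / pmf p a))"
    by (simp add: JX_def sum_distrib_right)
  also have "\<dots> \<ge> 0"
  proof (rule gibbs_inequality)
    show "JX a \<ge> 0" for a
      unfolding JX_def using nonneg by (simp add: sum_nonneg)
    show "(\<Sum>a\<in>UNIV. JX a) = 1"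
      using sum1 unfolding JX_def by (simp add: sum_UNIV_prod)
  qed (rule JX_pos)
  finally show ?thesis by simp
qed

lemma KL_div_eq_cond_div:
  fixes J :: "'a::finite \<times> unit \<Rightarrow> real"
  assumes sum1: "(\<Sum>z\<in>UNIV. J z) = 1" and pos: "\<And>z. J z > 0 \<Longrightarrow> pmf p (fst z) > 0"
  shows "KL_div (\<lambda>a. J (a, ())) (pmf p) = ereal (cond_div p J)"
proof -
  have "(\<Sum>a\<in>UNIV. J (a, ())) = 1"
    using sum1 by (simp add: sum_UNIV_prod UNIV_unit)
  then have "cond_div p J = (\<Sum>a\<in>UNIV. if J (a, ()) > 0 then J (a, ()) * ln (J (a, ()) / pmf p a) else 0)"
    unfolding cond_div_def by (simp add: sum_UNIV_prod UNIV_unit cong: if_cong)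
  moreover have "\<forall>a. J (a, ()) > 0 \<longrightarrow> pmf p a > 0"
    using pos by fastforce
  ultimately show ?thesis
    by (simp add: KL_div_def)
qed

section \<open>The method of types\<close>

definition joint_type :: "(nat \<Rightarrow> 's) \<Rightarrow> 'b list \<Rightarrow> ('s \<Rightarrow> 'a) \<Rightarrow> 'a \<times> 'b \<Rightarrow> real" where
  "joint_type g ws Z = emp (zip (map (Z \<circ> g) [0..<length ws]) ws)"

lemma joint_type_in_emp_types: "joint_type g ws Z \<in> emp_types (length ws)"
  by (auto simp: joint_type_def emp_types_def)

lemma joint_type_pos: "t < length ws \<Longrightarrow> joint_type g ws Z (Z (g t), ws ! t) > 0"
  unfolding joint_type_def by (rule emp_pos) (force simp: in_set_zip)

lemma joint_type_support:
  assumes S: "finite S" and gS: "g ` {..<length ws} \<subseteq> S"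
    and pg: "\<And>t. t < length ws \<Longrightarrow> p (g t) = p0"
    and Z: "Z \<in> set_pmf (Pi_pmf S d p)" and pos: "joint_type g ws Z z > 0"
  shows "pmf p0 (fst z) > 0"
proof -
  have "z \<in> set (zip (map (Z \<circ> g) [0..<length ws]) ws)"
  proof (rule ccontr)
    assume "z \<notin> set (zip (map (Z \<circ> g) [0..<length ws]) ws)"
    then have "joint_type g ws Z z = 0"
      by (simp add: joint_type_def emp_eq_count_list)
    with pos show False by simp
  qed
  then obtain t where t: "t < length ws" "z = (Z (g t), ws ! t)"
    by (auto simp: set_zip)
  have "Z (g t) \<in> set_pmf (p (g t))"
    using set_Pi_pmf_subset'[OF S] Z gS t(1) by (fastforce simp: PiE_dflt_def)
  then show ?thesis
    using pg t by (simp add: pmf_positive)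
qed

text \<open>The law under which the joint type \<open>J\<close> is typical: the conditional law of the first
  coordinate under \<open>J\<close> given the second one (arbitrarily \<open>p\<close> where that is undefined).\<close>
definition rev_channel :: "('a::finite \<times> 'b \<Rightarrow> real) \<Rightarrow> 'a pmf \<Rightarrow> 'b \<Rightarrow> 'a pmf" where
  "rev_channel J p b = embed_pmf (\<lambda>a. if (\<Sum>a'\<in>UNIV. J (a', b)) > 0
     then J (a, b) / (\<Sum>a'\<in>UNIV. J (a', b)) else pmf p a)"

lemma pmf_eq_exp_mult_pmf_rev_channel:
  fixes J :: "'a::finite \<times> 'b \<Rightarrow> real"
  assumes nonneg: "\<And>z. J z \<ge> 0" and J: "J (a, b) > 0" and p: "pmf p a > 0"
  shows "pmf p a = exp (- ln (J (a, b) / ((\<Sum>a'\<in>UNIV. J (a', b)) * pmf p a)))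
                     * pmf (rev_channel J p b) a"
proof -
  define JY where "JY = (\<Sum>a'\<in>UNIV. J (a', b))"
  define f where "f a' = (if JY > 0 then J (a', b) / JY else pmf p a')" for a'
  have f_nonneg: "f a' \<ge> 0" for a'
    using nonneg by (simp add: f_def)
  have "(\<Sum>a'\<in>UNIV. f a') = 1"
    by (cases "JY > 0") (simp_all add: f_def JY_def sum_divide_distrib[symmetric] sum_pmf_eq_1)
  then have "(\<integral>\<^sup>+a'. ennreal (f a') \<partial>count_space UNIV) = 1"
    using f_nonneg by (simp add: nn_integral_count_space_finite)
  then have "pmf (rev_channel J p b) a = f a"
    unfolding rev_channel_def JY_def[symmetric] f_def[symmetric]
    by (rule pmf_embed_pmf[OF f_nonneg])
  moreover have JY: "JY > 0"
    using J member_le_sum[of a UNIV "\<lambda>a'. J (a', b)"] nonneg unfolding JY_def by fastforce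
  ultimately show ?thesis
    using J p by (simp add: f_def JY_def[symmetric] exp_minus ln_div ln_mult exp_diff exp_add)
qed

lemma pmf_Pi_pmf_reweight:
  assumes S: "finite S" and inj: "inj_on g {..<i}" and gS: "g ` {..<i} \<subseteq> S"
    and Z: "\<And>x. x \<notin> S \<Longrightarrow> Z x = d"
    and same: "\<And>x. x \<in> S - g ` {..<i} \<Longrightarrow> p' x = p x"
    and w: "\<And>t. t < i \<Longrightarrow> pmf (p (g t)) (Z (g t)) = w t * pmf (p' (g t)) (Z (g t))"
  shows "pmf (Pi_pmf S d p) Z = (\<Prod>t<i. w t) * pmf (Pi_pmf S d p') Z"
proof -
  have split: "(\<Prod>x\<in>S. h x) = (\<Prod>x\<in>S - g ` {..<i}. h x) * (\<Prod>t<i. h (g t))"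
    for h :: "_ \<Rightarrow> real"
    using prod.subset_diff[OF gS S, of h] prod.reindex[OF inj, of h] by simp
  have "pmf (Pi_pmf S d p) Z
      = (\<Prod>x\<in>S - g ` {..<i}. pmf (p' x) (Z x)) * (\<Prod>t<i. w t * pmf (p' (g t)) (Z (g t)))"
    using S Z by (simp add: pmf_Pi' split w same)
  also have "\<dots> = (\<Prod>t<i. w t) * pmf (Pi_pmf S d p') Z"
    using S Z by (simp add: pmf_Pi' split prod.distrib)
  finally show ?thesis .
qed

lemma sum_ln_ratio_joint_type:
  fixes ws :: "'b::finite list" and Z :: "'s \<Rightarrow> 'a::finite" and g :: "nat \<Rightarrow> 's"
  assumes "ws \<noteq> []"
  defines "J \<equiv> joint_type g ws Z"
  shows "(\<Sum>t<length ws. ln (J (Z (g t), ws ! t) / ((\<Sum>a\<in>UNIV. J (a, ws ! t)) * pmf p (Z (g t)))))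
           = real (length ws) * cond_div p J"
proof -
  define h where "h z = ln (J z / ((\<Sum>a\<in>UNIV. J (a, snd z)) * pmf p (fst z)))" for z
  let ?zs = "zip (map (Z \<circ> g) [0..<length ws]) ws"
  have "(\<Sum>t<length ws. h (Z (g t), ws ! t)) = sum_list (map h ?zs)"
    by (simp add: sum_list_sum_nth atLeast0LessThan)
  also have "\<dots> = real (length ws) * (\<Sum>z\<in>UNIV. emp ?zs z * h z)"
    using assms(1) by (simp add: sum_list_map_eq_length_mult_emp)
  also have "(\<Sum>z\<in>UNIV. emp ?zs z * h z) = cond_div p J"
  proof -
    have "emp ?zs z * h z = (if J z > 0 then J z * h z else 0)" for z
      using emp_nonneg[of ?zs z] by (auto simp: J_def joint_type_def)
    then show ?thesis
      by (simp add: cond_div_def h_def cong: if_cong)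
  qed
  finally show ?thesis
    by (simp add: h_def)
qed

lemma prob_joint_type_le:
  fixes p :: "'s \<Rightarrow> 'a::finite pmf" and ws :: "'b::finite list"
  assumes S: "finite S" and inj: "inj_on g {..<length ws}" and gS: "g ` {..<length ws} \<subseteq> S"
    and pg: "\<And>t. t < length ws \<Longrightarrow> p (g t) = p0"
  shows "measure_pmf.prob (Pi_pmf S d p) {Z. joint_type g ws Z = J}
           \<le> exp (- real (length ws) * cond_div p0 J)"
proof (cases "ws = []")
  case False
  define i where "i = length ws"
  define p' where "p' x = (if x \<in> g ` {..<i}
     then rev_channel J p0 (ws ! the_inv_into {..<i} g x) else p x)" for x
  define h where "h z = ln (J z / ((\<Sum>a\<in>UNIV. J (a, snd z)) * pmf p0 (fst z)))" for z
  have fin: "finite (set_pmf (Pi_pmf S d p))"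
    by (rule finite_subset[OF set_Pi_pmf_subset']) (use S in auto)
  show ?thesis
  proof (rule measure_pmf_le_of_pmf_eq_mult[OF fin, where q = "Pi_pmf S d p'"])
    fix Z assume "Z \<in> {Z. joint_type g ws Z = J}" and Z: "Z \<in> set_pmf (Pi_pmf S d p)"
    then have J: "J = joint_type g ws Z" by simp
    have Jnonneg: "J z \<ge> 0" for z
      using J by (simp add: joint_type_def emp_nonneg)
    have "pmf (Pi_pmf S d p) Z = (\<Prod>t<i. exp (- h (Z (g t), ws ! t))) * pmf (Pi_pmf S d p') Z"
    proof (rule pmf_Pi_pmf_reweight[OF S inj[folded i_def] gS[folded i_def]])
      show "Z x = d" if "x \<notin> S" for x
        using set_Pi_pmf_subset[OF S, of d p] Z that by auto
      show "p' x = p x" if "x \<in> S - g ` {..<i}" for x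
        using that by (simp add: p'_def)
      fix t assume t: "t < i"
      have Jpos: "J (Z (g t), ws ! t) > 0"
        using J joint_type_pos t by (simp add: i_def)
      have p0pos: "pmf p0 (Z (g t)) > 0"
        using joint_type_support[OF S gS pg Z] J Jpos by fastforce
      have "p' (g t) = rev_channel J p0 (ws ! t)"
        using t inj by (simp add: p'_def i_def the_inv_into_f_f)
      then show "pmf (p (g t)) (Z (g t))
          = exp (- h (Z (g t), ws ! t)) * pmf (p' (g t)) (Z (g t))"
        using pg t pmf_eq_exp_mult_pmf_rev_channel[of J, OF Jnonneg Jpos p0pos]
        by (simp add: h_def i_def)
    qed
    also have "(\<Prod>t<i. exp (- h (Z (g t), ws ! t))) = exp (- real i * cond_div p0 J)"
      using sum_ln_ratio_joint_type[OF False, of g Z p0] J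
      by (simp add: exp_sum[symmetric] sum_negf h_def i_def)
    finally show "pmf (Pi_pmf S d p) Z = exp (- real (length ws) * cond_div p0 J) * pmf (Pi_pmf S d p') Z"
      by (simp add: i_def)
  qed simp
qed simp

lemma prob_method_of_types:
  fixes p :: "'s \<Rightarrow> 'a::finite pmf" and ws :: "'b::finite list"
  assumes S: "finite S" and inj: "inj_on g {..<length ws}" and gS: "g ` {..<length ws} \<subseteq> S"
    and pg: "\<And>t. t < length ws \<Longrightarrow> p (g t) = p0"
    and bound: "\<And>Z. Z \<in> set_pmf (Pi_pmf S d p) \<Longrightarrow> \<Phi> (joint_type g ws Z)
                  \<Longrightarrow> a \<le> real (length ws) * cond_div p0 (joint_type g ws Z)"
  shows "measure_pmf.prob (Pi_pmf S d p) {Z. \<Phi> (joint_type g ws Z)}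
           \<le> real ((length ws + 1) ^ CARD('a \<times> 'b)) * exp (- a)"
proof (rule prob_union_fibres_le[OF joint_type_in_emp_types finite_emp_types card_emp_types_le])
  fix J assume "\<Phi> J"
  show "measure_pmf.prob (Pi_pmf S d p) {Z. joint_type g ws Z = J} \<le> exp (- a)"
  proof (cases "\<exists>Z\<in>set_pmf (Pi_pmf S d p). joint_type g ws Z = J")
    case True
    then have "exp (- real (length ws) * cond_div p0 J) \<le> exp (- a)"
      using bound \<open>\<Phi> J\<close> by auto
    then show ?thesis
      using prob_joint_type_le[where p = p and g = g, OF S inj gS pg, of d J] by linarith
  next
    case False
    then show ?thesis
      by (subst measure_pmf_zero_iff[THEN iffD2]) auto
  qed
qed simp

lemma prob_mutual_info_ge_le:
  fixes p :: "'s \<Rightarrow> 'a::finite pmf" and ws :: "'b::finite list"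
  assumes S: "finite S" and inj: "inj_on g {..<length ws}" and gS: "g ` {..<length ws} \<subseteq> S"
    and pg: "\<And>t. t < length ws \<Longrightarrow> p (g t) = p0" and ws: "ws \<noteq> []"
  shows "measure_pmf.prob (Pi_pmf S d p) {Z. a \<le> real (length ws) * mutual_info (joint_type g ws Z)}
           \<le> real ((length ws + 1) ^ CARD('a \<times> 'b)) * exp (- a)"
proof (rule prob_method_of_types[where p = p and g = g, OF S inj gS pg])
  fix Z assume Z: "Z \<in> set_pmf (Pi_pmf S d p)"
    and "a \<le> real (length ws) * mutual_info (joint_type g ws Z)"
  moreover have "mutual_info (joint_type g ws Z) \<le> cond_div p0 (joint_type g ws Z)"
    using ws joint_type_support[OF S gS pg Z]
    by (intro mutual_info_le_cond_div) (simp_all add: joint_type_def emp_nonneg sum_emp_eq_1)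
  ultimately show "a \<le> real (length ws) * cond_div p0 (joint_type g ws Z)"
    by (meson mult_left_mono of_nat_0_le_iff order_trans)
qed

lemma emp_zip_replicate_unit: "emp (zip xs (replicate (length xs) ())) (a, ()) = emp xs a"
proof -
  have "zip xs (replicate (length xs) ()) = map (\<lambda>x. (x, ())) xs"
    by (induction xs) auto
  then show ?thesis
    by (simp add: emp_def filter_map comp_def)
qed

lemma prob_KL_div_ge_le:
  fixes p :: "'s \<Rightarrow> 'a::finite pmf"
  assumes S: "finite S" and inj: "inj_on g {..<i}" and gS: "g ` {..<i} \<subseteq> S"
    and pg: "\<And>t. t < i \<Longrightarrow> p (g t) = q" and i: "i > 0"
  shows "measure_pmf.prob (Pi_pmf S d p)
           {Z. ereal b \<le> ereal (real i) * KL_div (emp (map (Z \<circ> g) [0..<i])) (pmf q)}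
         \<le> real ((i + 1) ^ CARD('a)) * exp (- b)"
proof -
  let ?ws = "replicate i ()"
  have emp_eq: "emp (map (Z \<circ> g) [0..<i]) = (\<lambda>a. joint_type g ?ws Z (a, ()))" for Z
    using emp_zip_replicate_unit[of "map (Z \<circ> g) [0..<i]"] by (simp add: joint_type_def)
  have "measure_pmf.prob (Pi_pmf S d p)
          {Z. ereal b \<le> ereal (real i) * KL_div (\<lambda>a. joint_type g ?ws Z (a, ())) (pmf q)}
        \<le> real ((length ?ws + 1) ^ CARD('a \<times> unit)) * exp (- b)"
  proof (rule prob_method_of_types)
    fix Z assume Z: "Z \<in> set_pmf (Pi_pmf S d p)"
      and "ereal b \<le> ereal (real i) * KL_div (\<lambda>a. joint_type g ?ws Z (a, ())) (pmf q)"
    moreover have "KL_div (\<lambda>a. joint_type g ?ws Z (a, ())) (pmf q) = ereal (cond_div q (joint_type g ?ws Z))"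
      using i joint_type_support[of S g ?ws p q, OF S _ _ Z] gS pg
      by (intro KL_div_eq_cond_div) (simp_all add: joint_type_def sum_emp_eq_1)
    ultimately show "b \<le> real (length ?ws) * cond_div q (joint_type g ?ws Z)"
      by simp
  qed (use S inj gS pg in auto)
  then show ?thesis
    by (simp add: emp_eq)
qed

section \<open>Random codebook and channel outputs\<close>

lemma outputs_pmf_override_on:
  assumes "\<And>j. (m, j) \<notin> R"
  shows "outputs_pmf Q star N T (override_on f g R) m l = outputs_pmf Q star N T f m l"
  unfolding outputs_pmf_def override_on_def using assms by (intro Pi_pmf_cong) auto

text \<open>Given the other codewords and the outputs, codeword \<open>m'\<close> is still i.i.d. \<open>P\<close>:
  the outputs only depend on the transmitted codeword \<open>m \<noteq> m'\<close>.\<close>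
lemma joint_pmf_split_codeword:
  fixes M N m m' :: nat
  assumes "m' \<noteq> m" "m' \<in> {1..M}"
  defines "R \<equiv> {m'} \<times> {1..N}"
  shows "joint_pmf P Q star M N A m l =
     bind_pmf (Pi_pmf ({1..M} \<times> {1..N} - R) undefined (\<lambda>_. P)) (\<lambda>f.
       bind_pmf (outputs_pmf Q star N (A + N - 1) f m l) (\<lambda>y.
         map_pmf (\<lambda>g. (override_on f g R, y)) (Pi_pmf R undefined (\<lambda>_. P))))"
proof -
  let ?G = "Pi_pmf R undefined (\<lambda>_. P)" and ?F = "Pi_pmf ({1..M} \<times> {1..N} - R) undefined (\<lambda>_. P)"
  have "{1..M} \<times> {1..N} = R \<union> ({1..M} \<times> {1..N} - R)"
    using assms(2) unfolding R_def by auto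
  then have codebook: "codebook_pmf P M N = map_pmf (\<lambda>(g, f). override_on f g R) (pair_pmf ?G ?F)"
    unfolding codebook_pmf_def override_on_def
    by (subst (1) \<open>{1..M} \<times> {1..N} = _\<close>, subst Pi_pmf_union) (auto simp: case_prod_beta R_def)
  have outputs: "outputs_pmf Q star N T (override_on f g R) m l = outputs_pmf Q star N T f m l"
    for g f T
    using assms(1) by (intro outputs_pmf_override_on) (auto simp: R_def)
  show ?thesis
    unfolding joint_pmf_def codebook
    by (simp add: map_pmf_def bind_assoc_pmf bind_return_pmf pair_pmf_def outputs,
        subst bind_commute_pmf, rule bind_pmf_cong[OF refl], subst bind_commute_pmf, simp)
qed

lemma seg_eq_map_upt: "seg f a i = map (\<lambda>t. f (a + t)) [0..<i]"
  by (induction i) (auto simp: seg_def)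

lemma prob_codeword_event_le:
  fixes P :: "'x::finite pmf" and Q :: "'x \<Rightarrow> 'y::finite pmf"
  assumes m': "m' \<in> {1..M}" "m' \<noteq> m" and i: "1 \<le> i" "i \<le> N" and "B \<ge> 0"
    and outputs: "\<And>f. measure_pmf.prob (outputs_pmf Q star N (A + N - 1) f m l) Y \<le> B"
  shows "measure_pmf.prob (joint_pmf P Q star M N A m l)
           {(c, y). a \<le> real i * mutual_info (emp (zip (seg (\<lambda>j. c (m', j)) 1 i) (seg y s i)))
                    \<and> y \<in> Y}
         \<le> real ((i + 1) ^ CARD('x \<times> 'y)) * exp (- a) * B"
proof -
  define R where "R = {m'} \<times> {1..N}"
  define g where "g t = (m', 1 + t)" for t :: nat
  define K where "K = real ((i + 1) ^ CARD('x \<times> 'y)) * exp (- a)"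
  let ?E = "{(c, y). a \<le> real i * mutual_info (emp (zip (seg (\<lambda>j. c (m', j)) 1 i) (seg y s i)))
                    \<and> y \<in> Y}"
  have K: "K \<ge> 0"
    by (simp add: K_def)
  have codeword: "measure_pmf.prob (map_pmf (\<lambda>h. (override_on f h R, y)) (Pi_pmf R undefined (\<lambda>_. P))) ?E
      \<le> K * indicator Y y" for f y
  proof (cases "y \<in> Y")
    case True
    have "seg (\<lambda>j. override_on f h R (m', j)) 1 i = map (h \<circ> g) [0..<length (seg y s i)]" for h
      using i by (auto simp: seg_eq_map_upt override_on_def R_def g_def)
    then have "(\<lambda>h. (override_on f h R, y)) -` ?E
        = {h. a \<le> real (length (seg y s i)) * mutual_info (joint_type g (seg y s i) h)}"
      using True by (auto simp: joint_type_def seg_def)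
    moreover have "measure_pmf.prob (Pi_pmf R undefined (\<lambda>_. P))
        {h. a \<le> real (length (seg y s i)) * mutual_info (joint_type g (seg y s i) h)} \<le> K"
      unfolding K_def using prob_mutual_info_ge_le[of R g "seg y s i" "\<lambda>_. P" P undefined a] i
      by (simp add: R_def g_def inj_on_def seg_def image_subset_iff)
    ultimately show ?thesis
      using True by simp
  qed simp
  have "measure_pmf.prob (joint_pmf P Q star M N A m l) ?E \<le> K * B"
    unfolding joint_pmf_split_codeword[OF m'(2,1)] R_def[symmetric]
  proof (rule measure_bind_pmf_le)
    fix f
    have "measure_pmf.prob (bind_pmf (outputs_pmf Q star N (A + N - 1) f m l)
            (\<lambda>y. map_pmf (\<lambda>h. (override_on f h R, y)) (Pi_pmf R undefined (\<lambda>_. P)))) ?E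
        \<le> K * measure_pmf.prob (outputs_pmf Q star N (A + N - 1) f m l) Y"
      by (rule measure_bind_pmf_le_indicator[OF codeword K])
    also have "\<dots> \<le> K * B"
      using outputs K by (rule mult_left_mono)
    finally show "measure_pmf.prob (bind_pmf (outputs_pmf Q star N (A + N - 1) f m l)
            (\<lambda>y. map_pmf (\<lambda>h. (override_on f h R, y)) (Pi_pmf R undefined (\<lambda>_. P)))) ?E \<le> K * B" .
  qed (use K \<open>B \<ge> 0\<close> in simp)
  then show ?thesis
    by (simp add: K_def)
qed

lemma prob_outputs_KL_div_ge_le:
  fixes Q :: "'x \<Rightarrow> 'y::finite pmf"
  assumes i: "1 \<le> i" and window: "s + i \<le> T + 1" "1 \<le> s" "s + i \<le> l \<or> l + N \<le> s"
  shows "measure_pmf.prob (outputs_pmf Q star N T c m l)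
           {y. ereal b \<le> ereal (real i) * KL_div (emp (seg y s i)) (pmf (Q star))}
         \<le> real ((i + 1) ^ CARD('y)) * exp (- b)"
proof -
  have "seg y s i = map (y \<circ> (\<lambda>t. s + t)) [0..<i]" for y :: "nat \<Rightarrow> 'y"
    by (simp add: seg_eq_map_upt comp_def)
  then show ?thesis
    unfolding outputs_pmf_def
    by (simp only:) (rule prob_KL_div_ge_le; use i window in \<open>auto simp: inj_on_def\<close>)
qed

lemma prob_E_all_le:
  fixes P :: "'x::finite pmf" and Q :: "'x \<Rightarrow> 'y::finite pmf"
  assumes m': "m' \<in> {1..M}" "m' \<noteq> m" and i: "1 \<le> i" "i \<le> N" "i \<le> n" and n: "n \<le> A + N - 1"
  shows "measure_pmf.prob (joint_pmf P Q star M N A m l) {(c, y). E_all Q star M t1 t2 m' n i c y}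
    \<le> (real N + 1) ^ (CARD('x \<times> 'y) + CARD('y))
       * (real M powr (- (t1 + t2)) + real M powr (- t2) * indicator {l..l + 2 * N} n)"
proof -
  define s where "s = n - i + 1"
  define Y where "Y = {y. ereal (t1 * ln (real M)) \<le> ereal (real i) * KL_div (emp (seg y s i)) (pmf (Q star))}"
  define B where "B = (if n < l \<or> l + N \<le> s then real ((i + 1) ^ CARD('y)) * real M powr (- t1) else 1)"
  have M: "real M > 0"
    using m' by simp
  have exp_ln_M: "exp (- (t * ln (real M))) = real M powr (- t)" for t
    using M by (simp add: powr_def)
  have B: "B \<ge> 0"
    by (simp add: B_def)
  have "t2 * ln (real M) \<le> real i * mutual_info (emp (zip (seg (\<lambda>j. c (m', j)) 1 i) (seg y s i)))
      \<and> y \<in> Y" if "E_all Q star M t1 t2 m' n i c y" for c y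
  proof -
    have "E_k Q star M t1 t2 m' n i i c y"
      using that i by (simp add: E_all_def)
    then show ?thesis
      by (simp add: E_k_def s_def Y_def)
  qed
  then have "measure_pmf.prob (joint_pmf P Q star M N A m l) {(c, y). E_all Q star M t1 t2 m' n i c y}
      \<le> measure_pmf.prob (joint_pmf P Q star M N A m l)
          {(c, y). t2 * ln (real M) \<le> real i * mutual_info (emp (zip (seg (\<lambda>j. c (m', j)) 1 i) (seg y s i)))
                   \<and> y \<in> Y}"
    by (intro measure_pmf.finite_measure_mono) auto
  also have "\<dots> \<le> real ((i + 1) ^ CARD('x \<times> 'y)) * exp (- (t2 * ln (real M))) * B"
  proof (rule prob_codeword_event_le[OF m' i(1,2) B])
    show "measure_pmf.prob (outputs_pmf Q star N (A + N - 1) f m l) Y \<le> B" for f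
    proof (cases "n < l \<or> l + N \<le> s")
      case True
      then have "measure_pmf.prob (outputs_pmf Q star N (A + N - 1) f m l) Y
          \<le> real ((i + 1) ^ CARD('y)) * exp (- (t1 * ln (real M)))"
        unfolding Y_def using i n by (intro prob_outputs_KL_div_ge_le) (auto simp: s_def)
      then show ?thesis
        using True by (simp add: B_def exp_ln_M)
    qed (simp add: B_def)
  qed
  also have "\<dots> = real ((i + 1) ^ CARD('x \<times> 'y)) * real M powr (- t2) * B"
    by (simp add: exp_ln_M)
  also have "\<dots> \<le> (real N + 1) ^ (CARD('x \<times> 'y) + CARD('y))
       * (real M powr (- (t1 + t2)) + real M powr (- t2) * indicator {l..l + 2 * N} n)"
  proof -
    let ?U = "(real N + 1) ^ (CARD('x \<times> 'y) + CARD('y))"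
    have pow_le: "real ((i + 1) ^ k) \<le> (real N + 1) ^ k" for k
      using i by (simp add: power_mono add.commute)
    have powr_split: "real M powr (- (t1 + t2)) = real M powr (- t1) * real M powr (- t2)"
      by (simp add: powr_add[symmetric])
    show ?thesis
    proof (cases "n < l \<or> l + N \<le> s")
      case True
      have "real ((i + 1) ^ CARD('x \<times> 'y)) * real ((i + 1) ^ CARD('y)) \<le> ?U"
        unfolding power_add using pow_le by (intro mult_mono) simp_all
      have "real ((i + 1) ^ CARD('x \<times> 'y)) * real M powr (- t2) * B
          = real ((i + 1) ^ CARD('x \<times> 'y)) * real ((i + 1) ^ CARD('y)) * real M powr (- (t1 + t2))"
        using True unfolding B_def powr_split by (simp add: mult_ac)
      also have "\<dots> \<le> ?U * real M powr (- (t1 + t2))"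
        by (rule mult_right_mono) (fact, simp)
      also have "\<dots> \<le> ?U * (real M powr (- (t1 + t2)) + real M powr (- t2) * indicator {l..l + 2 * N} n)"
        by (intro mult_left_mono) simp_all
      finally show ?thesis .
    next
      case False
      then have "indicator {l..l + 2 * N} n = (1::real)"
        using i by (auto simp: s_def)
      have "real ((i + 1) ^ CARD('x \<times> 'y)) \<le> ?U"
        using pow_le[of "CARD('x \<times> 'y)"] unfolding power_add
        by (rule order.trans) (simp add: mult_left_le one_le_power)
      then have "real ((i + 1) ^ CARD('x \<times> 'y)) * real M powr (- t2) * B \<le> ?U * real M powr (- t2)"
        using False by (simp add: B_def mult_right_mono)
      also have "\<dots> \<le> ?U * (real M powr (- (t1 + t2)) + real M powr (- t2) * indicator {l..l + 2 * N} n)"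
        using \<open>indicator _ n = 1\<close> by (intro mult_left_mono) simp_all
      finally show ?thesis .
    qed
  qed
  finally show ?thesis .
qed

lemma sum_prob_E_all_le:
  fixes P :: "'x::finite pmf" and Q :: "'x \<Rightarrow> 'y::finite pmf"
  assumes A: "A \<ge> 1"
  shows "(\<Sum>m'\<in>{1..M} - {m}. \<Sum>n=1..A + N - 1. \<Sum>i=1..min N n.
           measure_pmf.prob (joint_pmf P Q star M N A m l) {(c, y). E_all Q star M t1 t2 m' n i c y})
         \<le> (real M powr (-(t1 + t2 - 1)) * real A + real M powr (-(t2 - 1)))
            * (2 * (real N + 1) ^ (CARD('x \<times> 'y) + CARD('y) + 2))"
proof -
  define U where "U = (real N + 1) ^ (CARD('x \<times> 'y) + CARD('y))"
  define x1 where "x1 = real M powr (- (t1 + t2))"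
  define x2 where "x2 = real M powr (- t2)"
  define T where "T = A + N - 1"
  define W where "W = {l..l + 2 * N}"
  have nonneg: "U \<ge> 0" "x1 \<ge> 0" "x2 \<ge> 0"
    by (simp_all add: U_def x1_def x2_def)
  have per_codeword: "(\<Sum>n=1..T. \<Sum>i=1..min N n.
      measure_pmf.prob (joint_pmf P Q star M N A m l) {(c, y). E_all Q star M t1 t2 m' n i c y})
      \<le> 2 * U * (real N + 1) ^ 2 * (real A * x1 + x2)" if m': "m' \<in> {1..M} - {m}" for m'
  proof -
    have "(\<Sum>n=1..T. \<Sum>i=1..min N n.
        measure_pmf.prob (joint_pmf P Q star M N A m l) {(c, y). E_all Q star M t1 t2 m' n i c y})
        \<le> (\<Sum>n=1..T. real N * (U * (x1 + x2 * indicator W n)))"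
    proof (rule sum_mono)
      fix n assume n: "n \<in> {1..T}"
      have "(\<Sum>i=1..min N n.
          measure_pmf.prob (joint_pmf P Q star M N A m l) {(c, y). E_all Q star M t1 t2 m' n i c y})
          \<le> (\<Sum>i=1..min N n. U * (x1 + x2 * indicator W n))"
        using m' n unfolding U_def x1_def x2_def W_def T_def
        by (intro sum_mono prob_E_all_le) auto
      also have "\<dots> \<le> real N * (U * (x1 + x2 * indicator W n))"
        using nonneg by (simp add: mult_right_mono)
      finally show "(\<Sum>i=1..min N n.
          measure_pmf.prob (joint_pmf P Q star M N A m l) {(c, y). E_all Q star M t1 t2 m' n i c y})
          \<le> real N * (U * (x1 + x2 * indicator W n))" .
    qed
    also have "\<dots> = U * (real N * real T * x1 + real N * real (card ({1..T} \<inter> W)) * x2)"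
      by (simp add: sum.distrib sum_distrib_left[symmetric] indicator_def sum.If_cases algebra_simps)
    also have "\<dots> \<le> U * ((real N + 1) ^ 2 * real A * x1 + 2 * (real N + 1) ^ 2 * x2)"
    proof -
      have "N \<le> A * N"
        using A by simp
      then have "T \<le> A * (N + 1)"
        unfolding T_def distrib_left by linarith
      then have "real T \<le> real A * (real N + 1)"
        by (metis of_nat_1 of_nat_add of_nat_le_iff of_nat_mult)
      then have "real N * real T \<le> (real N + 1) ^ 2 * real A"
        by (rule order.trans[OF mult_left_mono]) (simp_all add: power2_eq_square algebra_simps)
      moreover have "real N * real (card ({1..T} \<inter> W)) \<le> 2 * (real N + 1) ^ 2"
      proof -
        have "card ({1..T} \<inter> W) \<le> 2 * N + 1"
          using card_mono[of W "{1..T} \<inter> W"] by (simp add: W_def)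
        then have "real N * real (card ({1..T} \<inter> W)) \<le> real N * (2 * real N + 1)"
          by (intro mult_left_mono) simp_all
        then show ?thesis
          by (simp add: power2_eq_square algebra_simps)
      qed
      ultimately show ?thesis
        using nonneg by (intro mult_left_mono add_mono mult_right_mono) simp_all
    qed
    also have "\<dots> \<le> 2 * U * (real N + 1) ^ 2 * (real A * x1 + x2)"
      using nonneg by (simp add: algebra_simps)
    finally show ?thesis
      by (simp add: T_def)
  qed
  have "(\<Sum>m'\<in>{1..M} - {m}. \<Sum>n=1..T. \<Sum>i=1..min N n.
      measure_pmf.prob (joint_pmf P Q star M N A m l) {(c, y). E_all Q star M t1 t2 m' n i c y})
      \<le> real (card ({1..M} - {m})) * (2 * U * (real N + 1) ^ 2 * (real A * x1 + x2))"
    using sum_mono[of "{1..M} - {m}", OF per_codeword] by simp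
  also have "\<dots> \<le> real M * (2 * U * (real N + 1) ^ 2 * (real A * x1 + x2))"
    using nonneg card_mono[of "{1..M}" "{1..M} - {m}"] by (intro mult_right_mono) auto
  also have "\<dots> = (real M * x1 * real A + real M * x2) * (2 * U * (real N + 1) ^ 2)"
    by (simp add: algebra_simps)
  also have "\<dots> = (real M powr (-(t1 + t2 - 1)) * real A + real M powr (-(t2 - 1)))
      * (2 * (real N + 1) ^ (CARD('x \<times> 'y) + CARD('y) + 2))"
  proof -
    have "real M * x1 = real M powr (-(t1 + t2 - 1))" and "real M * x2 = real M powr (-(t2 - 1))"
      by (simp_all add: x1_def x2_def powr_mult_base algebra_simps)
    then show ?thesis
      by (simp add: U_def power_add power2_eq_square mult_ac)
  qed
  finally show ?thesis
    by (simp add: T_def)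
qed

theorem lemma2:
  shows "\<exists>(C::real) (d::nat). \<forall>(P::'x::finite pmf) (Q::'x \<Rightarrow> 'y::finite pmf) (star::'x)
            (M::nat) (N::nat) (A::nat) (t1::real) (t2::real) (m::nat) (l::nat).
     m \<in> {1..M} \<longrightarrow> A \<ge> 1 \<longrightarrow> l \<in> {1..A} \<longrightarrow>
     (\<Sum>m'\<in>{1..M} - {m}. \<Sum>n=1..A + N - 1. \<Sum>i=1..min N n.
        measure_pmf.prob (joint_pmf P Q star M N A m l)
          {(c, y). E_all Q star M t1 t2 m' n i c y})
     \<le> (real M powr (-(t1 + t2 - 1)) * real A + real M powr (-(t2 - 1))) * (C * (real N + 1) ^ d)"
  by (intro exI[of _ 2] exI[of _ "CARD('x \<times> 'y) + CARD('y) + 2"] allI impI sum_prob_E_all_le)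

end
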